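(* Let $\mathcal{K}$ be a compact second-countable Hausdorff space, let $\mathcal{C}$ be the set of continuous functions $\mathcal{K}\to\mathbb{R}$, and let $\mathcal{F}\subseteq\mathcal{C}$ be a generating system. Let $(G_1,G_2,\dots)$ be a sequence of $\mathcal{K}$-decorated graphs with $|V(G_n)|\to\infty$. Then the following are equivalent: (i) $(G_1,G_2,\dots)$ is convergent; (ii) for every $\mathcal{C}$-decorated graph $F$, the numerical sequence $t(F,G_n)$ is convergent; (iii) for every $\mathcal{F}$-decorated graph $F$, the numerical sequence $t(F,G_n)$ is convergent.
   Context: For a set $S$ and $n\in\mathbb{Z}_+$, an $S$-decorated graph on $n$ nodes is a symmetric map $G:[n]\times[n]\to S$ (i.e. $G(x,y)=G(y,x)$); write $G_{x,y}=G(x,y)$ and $V(G)=[n]$. The set of $\mathcal{K}$-decorated graphs on $k$ nodes is a compact space with the product topology. A subset $\mathcal{F}\subseteq\mathcal{C}$ is a generating system if the linear span of $\mathcal{F}$ is dense in $\mathcal{C}$ in the supremum norm. Sampling: for a $\mathcal{K}$-decorated graph $G$ and $k\le|V(G)|$, pick an ordered $k$-tuple $(v_1,\dots,v_k)$ of distinct nodes of $G$ uniformly at random and let $\mathbb{G}(G,k)$ be the random $k$-node decorated graph with entries $\mathbb{G}(G,k)_{i,j}=G_{v_i,v_j}$ for $1\le i<j\le k$. A sequence $(G_n)$ with $|V(G_n)|\to\infty$ is convergent if for every $k\in\mathbb{N}$ and every continuous function $f$ on the space of these sampled decorated graphs (i.e. of the entries $(i,j)$, $1\le i<j\le k$), the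 limit $\lim_{n\to\infty}E\bigl(f(\mathbb{G}(G_n,k))\bigr)$ exists. For an $\mathcal{F}'$-decorated graph $F$ on $[k]$ (where $\mathcal{F}'\subseteq\mathcal{C}$) and a $\mathcal{K}$-decorated graph $G$, the weight of a map $\varphi:[k]\to V(G)$ is $w(\varphi)=\prod_{1\le i<j\le k}F_{i,j}\bigl(G_{\varphi(i),\varphi(j)}\bigr)$, $\hom(F,G)=\sum_{\varphi:[k]\to V(G)}w(\varphi)$, and $t(F,G)=\hom(F,G)/|V(G)|^k$. *)

theory Defs
  imports "HOL-Analysis.Analysis"
begin

text \<open>A decorated graph on n nodes is represented by a map G :: nat => nat => 'a,
  whose node set is {0..<n}; only the values on {0..<n} x {0..<n} matter.\<close>

definition dgraph :: "nat \<Rightarrow> (nat \<Rightarrow> nat \<Rightarrow> 'a) \<Rightarrow> bool" where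
  "dgraph n G \<longleftrightarrow> (\<forall>x<n. \<forall>y<n. G x y = G y x)"

definition dgraph_in :: "'a set \<Rightarrow> nat \<Rightarrow> (nat \<Rightarrow> nat \<Rightarrow> 'a) \<Rightarrow> bool" where
  "dgraph_in S k F \<longleftrightarrow> (\<forall>i<k. \<forall>j<k. F i j \<in> S \<and> F i j = F j i)"

definition cont_fns :: "('k::topological_space \<Rightarrow> real) set" where
  "cont_fns = {f. continuous_on UNIV f}"

definition generating_system :: "('k::topological_space \<Rightarrow> real) set \<Rightarrow> bool" where
  "generating_system Fam \<longleftrightarrow> Fam \<subseteq> cont_fns \<and>
     (\<forall>f\<in>cont_fns. \<forall>e>0. \<exists>m (c::nat \<Rightarrow> real) h.
        (\<forall>i<m. h i \<in> Fam) \<and> (\<forall>x. \<bar>f x - (\<Sum>i<m. c i * h i x)\<bar> < e))"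

definition pairs :: "nat \<Rightarrow> (nat \<times> nat) set" where
  "pairs k = {(i,j). i < j \<and> j < k}"

definition inj_tuples :: "nat \<Rightarrow> nat \<Rightarrow> (nat \<Rightarrow> nat) set" where
  "inj_tuples k n = {\<phi> \<in> {0..<k} \<rightarrow>\<^sub>E {0..<n}. inj_on \<phi> {0..<k}}"

text \<open>E f(G(G,k)) for the uniformly random sampled k-node graph.\<close>
definition sample_exp ::
  "nat \<Rightarrow> (nat \<Rightarrow> nat \<Rightarrow> 'k) \<Rightarrow> nat \<Rightarrow> ((nat \<times> nat \<Rightarrow> 'k) \<Rightarrow> real) \<Rightarrow> real" where
  "sample_exp n G k f =
     (\<Sum>\<phi>\<in>inj_tuples k n. f (restrict (\<lambda>(i,j). G (\<phi> i) (\<phi> j)) (pairs k)))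
       / real (card (inj_tuples k n))"

definition dg_convergent ::
  "(nat \<Rightarrow> nat) \<Rightarrow> (nat \<Rightarrow> nat \<Rightarrow> nat \<Rightarrow> 'k::topological_space) \<Rightarrow> bool" where
  "dg_convergent N Gs \<longleftrightarrow>
     (\<forall>k (f::(nat \<times> nat \<Rightarrow> 'k) \<Rightarrow> real).
        continuous_map (product_topology (\<lambda>_. euclidean) (pairs k)) euclidean f \<longrightarrow>
        convergent (\<lambda>n. sample_exp (N n) (Gs n) k f))"

definition hom_dens ::
  "nat \<Rightarrow> (nat \<Rightarrow> nat \<Rightarrow> ('k \<Rightarrow> real)) \<Rightarrow> nat \<Rightarrow> (nat \<Rightarrow> nat \<Rightarrow> 'k) \<Rightarrow> real" where
  "hom_dens k F n G =
     (\<Sum>\<phi>\<in>{0..<k} \<rightarrow>\<^sub>E {0..<n}. \<Prod>(i,j)\<in>pairs k. F i j (G (\<phi> i) (\<phi> j))) / real n ^ k"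

end

theory Submission
  imports Defs
begin

text \<open>
  The homomorphism density t(F,G) is the average of the product
  \<open>x \<mapsto> \<Prod>\<^bsub>i<j\<^esub> F\<^sub>i\<^sub>j(x\<^sub>i\<^sub>j)\<close> over all maps \<open>[k] \<rightarrow> V(G)\<close>, while the sampling
  expectation averages it over injective maps only. The non-injective maps form a vanishing
  proportion as \<open>|V(G)| \<rightarrow> \<infinity>\<close>, so for bounded F the two sequences differ by a null sequence
  and converge together; this gives (i) \<Rightarrow> (ii), and (ii) \<Rightarrow> (iii) is trivial.

  For (iii) \<Rightarrow> (i), sampling expectations are linear in f and 1-Lipschitz for the sup norm,
  so convergence passes to linear combinations and then to uniform limits of them. It remains
  that linear combinations of products \<open>\<Prod>\<^sub>p h\<^sub>p(x\<^sub>p)\<close> with all \<open>h\<^sub>p \<in> \<F>\<close> are uniformly dense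
  in the continuous functions on the compact space \<open>\<K>\<^bsup>pairs\<^esup>\<close>. By Stone-Weierstrass this
  holds for continuous factors \<open>h\<^sub>p\<close> (points of the compact Hausdorff space \<open>\<K>\<close> are
  separated by continuous functions, by Urysohn), and each continuous factor is in turn
  uniformly approximated by linear combinations from \<open>\<F>\<close>; expanding the product of these
  approximants gives a linear combination of products of generators.
\<close>

text \<open>The t0 and t1 instances are needed only as superclass arities for the t2 instance,
  which Stone-Weierstrass requires of the space \<open>\<K>\<^bsup>pairs\<^esup>\<close>.\<close>

lemma open_vimage_coordinate: "open U \<Longrightarrow> open ((\<lambda>f. f i) -` U)"
  by (simp add: open_vimage)

instance "fun" :: (type, t0_space) t0_space
proof
  fix x y :: "'a \<Rightarrow> 'b"
  assume "x \<noteq> y"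
  then obtain i where "x i \<noteq> y i" by auto
  then obtain U where "open U" "\<not> (x i \<in> U \<longleftrightarrow> y i \<in> U)"
    using t0_space_class.t0_space by blast
  then show "\<exists>U. open U \<and> \<not> (x \<in> U \<longleftrightarrow> y \<in> U)"
    by (intro exI[of _ "(\<lambda>f. f i) -` U"]) (simp add: open_vimage_coordinate)
qed

instance "fun" :: (type, t1_space) t1_space
proof
  fix x y :: "'a \<Rightarrow> 'b"
  assume "x \<noteq> y"
  then obtain i where "x i \<noteq> y i" by auto
  then obtain U where "open U" "x i \<in> U" "y i \<notin> U"
    using t1_space_class.t1_space by blast
  then show "\<exists>U. open U \<and> x \<in> U \<and> y \<notin> U"
    by (intro exI[of _ "(\<lambda>f. f i) -` U"]) (simp add: open_vimage_coordinate)
qed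

instance "fun" :: (type, t2_space) t2_space
proof
  fix x y :: "'a \<Rightarrow> 'b"
  assume "x \<noteq> y"
  then obtain i where "x i \<noteq> y i" by auto
  then obtain U V where UV: "open U" "open V" "x i \<in> U" "y i \<in> V" "U \<inter> V = {}"
    using hausdorff[of "x i" "y i"] by blast
  have "open ((\<lambda>f. f i) -` U)" "open ((\<lambda>f. f i) -` V)"
    using UV(1,2) by (simp_all add: open_vimage_coordinate)
  with UV show "\<exists>U V. open U \<and> open V \<and> x \<in> U \<and> y \<in> V \<and> U \<inter> V = {}"
    by (intro exI[of _ "(\<lambda>f. f i) -` U"] exI[of _ "(\<lambda>f. f i) -` V"]) auto
qed

lemma Hausdorff_space_euclidean_t2: "Hausdorff_space (euclidean :: 'a::t2_space topology)"
  unfolding Hausdorff_space_def disjnt_def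
proof (intro allI impI)
  fix x y :: 'a
  assume "x \<in> topspace euclidean \<and> y \<in> topspace euclidean \<and> x \<noteq> y"
  then obtain U V where "open U" "open V" "x \<in> U" "y \<in> V" "U \<inter> V = {}"
    using hausdorff[of x y] by blast
  then show "\<exists>U V. openin euclidean U \<and> openin euclidean V \<and> x \<in> U \<and> y \<in> V \<and> U \<inter> V = {}"
    by auto
qed

lemma continuous_separating_function:
  fixes a b :: "'k::t2_space"
  assumes "compact (UNIV :: 'k set)" "a \<noteq> b"
  obtains g :: "'k \<Rightarrow> real" where "continuous_on UNIV g" "g a \<noteq> g b"
proof -
  have normal: "normal_space (euclidean :: 'k topology)"
    using assms(1) by (intro compact_Hausdorff_or_regular_imp_normal_space)
      (auto simp: compact_space_def Hausdorff_space_euclidean_t2)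
  have closed: "closedin euclidean {a}" "closedin euclidean {b}"
    using closedin_Hausdorff_singleton[OF Hausdorff_space_euclidean_t2] by auto
  have "disjnt {a} {b}"
    using assms(2) by simp
  then obtain g where "continuous_map euclidean euclideanreal g" "g ` {a} \<subseteq> {0}" "g ` {b} \<subseteq> {1}"
    using Urysohn_lemma_alt[OF normal closed, of 0 1] by blast
  then show thesis
    using that by simp
qed

lemma bounded_continuous_family:
  fixes H :: "'i \<Rightarrow> 'k::topological_space \<Rightarrow> real"
  assumes "compact (UNIV :: 'k set)" "finite P" "\<And>p. p \<in> P \<Longrightarrow> continuous_on UNIV (H p)"
  obtains B where "0 \<le> B" "\<And>p t. p \<in> P \<Longrightarrow> \<bar>H p t\<bar> \<le> B"
proof -
  have "compact (\<Union>p\<in>P. range (H p))"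
  proof (rule compact_UN)
    show "compact (range (H p))" if "p \<in> P" for p
      using assms(3)[OF that] assms(1) by (rule compact_continuous_image)
  qed (fact assms(2))
  then have "bounded (\<Union>p\<in>P. range (H p))"
    by (rule compact_imp_bounded)
  then obtain B where B: "\<And>y. y \<in> (\<Union>p\<in>P. range (H p)) \<Longrightarrow> \<bar>y\<bar> \<le> B"
    unfolding bounded_real by blast
  show thesis
  proof
    show "0 \<le> \<bar>B\<bar>" by simp
    fix p t
    assume "p \<in> P"
    then have "\<bar>H p t\<bar> \<le> B"
      by (intro B) blast
    then show "\<bar>H p t\<bar> \<le> \<bar>B\<bar>"
      by linarith
  qed
qed

lemma compact_PiE_UNIV:
  assumes "compact (UNIV :: 'k::topological_space set)"
  shows "compact (PiE P (\<lambda>_. UNIV :: 'k set))"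
proof -
  define T where "T = product_topology (\<lambda>_. euclidean :: 'k topology) P"
  have "continuous_map T euclidean (\<lambda>x. x)"
    unfolding euclidean_product_topology[symmetric] continuous_map_componentwise_UNIV
  proof
    fix i
    show "continuous_map T euclidean (\<lambda>x. x i)"
    proof (cases "i \<in> P")
      case True
      then show ?thesis unfolding T_def by (rule continuous_map_product_projection)
    next
      case False
      show ?thesis
      proof (rule continuous_map_eq[of T euclidean "\<lambda>x. undefined"])
        fix x
        assume "x \<in> topspace T"
        then show "undefined = x i"
          using PiE_arb[of x P "\<lambda>_. UNIV" i] False by (simp add: T_def)
      qed simp
    qed
  qed
  moreover have "compact_space T"
    unfolding T_def compact_space_product_topology using assms by (simp add: compact_space_def)
  ultimately have "compactin euclidean ((\<lambda>x. x) ` topspace T)"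
    unfolding compact_space_def by (rule image_compactin[rotated])
  then show ?thesis
    by (simp add: T_def)
qed

lemma continuous_on_PiE_UNIV:
  assumes "continuous_map (product_topology (\<lambda>_. euclidean) P) euclidean f"
  shows "continuous_on (PiE P (\<lambda>_. UNIV)) f"
proof -
  have "continuous_map (top_of_set (PiE P (\<lambda>_. UNIV))) (product_topology (\<lambda>_. euclidean) P) (\<lambda>x. x)"
    unfolding continuous_map_componentwise
  proof (intro conjI ballI)
    show "(\<lambda>x. x) ` topspace (top_of_set (PiE P (\<lambda>_. UNIV))) \<subseteq> extensional P"
      by (auto simp: PiE_def)
    fix i
    show "continuous_map (top_of_set (PiE P (\<lambda>_. UNIV))) euclidean (\<lambda>x. x i)"
      using continuous_on_subset[OF continuous_on_product_coordinates[of i]] by auto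
  qed
  from continuous_map_compose[OF this assms] show ?thesis
    by (simp add: o_def)
qed

lemma finite_pairs [simp]: "finite (pairs k)"
  by (rule finite_subset[of _ "{..<k} \<times> {..<k}"]) (auto simp: pairs_def)

lemma card_inj_tuples: "card (inj_tuples k n) = (\<Prod>i<k. n - i)"
  using card_inj_on_subset_funcset[of "{0..<k}" "{0..<n}" "{0..<k}"]
  by (simp add: inj_tuples_def atLeast0LessThan)

lemma card_inj_tuples_over_power_tendsto:
  "(\<lambda>n. real (card (inj_tuples k n)) / real n ^ k) \<longlonglongrightarrow> 1"
proof -
  have "(\<lambda>n. \<Prod>i<k. 1 - real i / real n) \<longlonglongrightarrow> (\<Prod>i<k. 1 - 0)"
    by (intro tendsto_prod tendsto_diff tendsto_const lim_const_over_n)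
  moreover have "\<forall>\<^sub>F n in sequentially.
      (\<Prod>i<k. 1 - real i / real n) = real (card (inj_tuples k n)) / real n ^ k"
  proof (rule eventually_sequentiallyI[of "Suc k"])
    fix n assume "Suc k \<le> n"
    then have "real (card (inj_tuples k n)) = (\<Prod>i<k. real n - real i)"
      by (simp add: card_inj_tuples of_nat_diff)
    moreover have "(\<Prod>i<k. 1 - real i / real n) = (\<Prod>i<k. (real n - real i) / real n)"
      using \<open>Suc k \<le> n\<close> by (intro prod.cong) (auto simp: field_simps)
    ultimately show "(\<Prod>i<k. 1 - real i / real n) = real (card (inj_tuples k n)) / real n ^ k"
      by (simp add: prod_dividef)
  qed
  ultimately show ?thesis by (simp add: tendsto_cong)
qed

lemma abs_prod_le_power:
  fixes b :: "'i \<Rightarrow> real"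
  assumes "\<And>p. p \<in> P \<Longrightarrow> \<bar>b p\<bar> \<le> C"
  shows "\<bar>prod b P\<bar> \<le> C ^ card P"
proof -
  have "\<bar>prod b P\<bar> = (\<Prod>p\<in>P. \<bar>b p\<bar>)" by (rule abs_prod)
  also have "\<dots> \<le> (\<Prod>p\<in>P. C)" by (rule prod_mono) (use assms in auto)
  finally show ?thesis by simp
qed

lemma abs_prod_diff_le:
  fixes a b :: "'i \<Rightarrow> real"
  assumes "finite P" "\<And>p. p \<in> P \<Longrightarrow> \<bar>a p\<bar> \<le> B" "\<And>p. p \<in> P \<Longrightarrow> \<bar>a p - b p\<bar> \<le> \<delta>"
    and "0 \<le> \<delta>" "\<delta> \<le> 1" "0 \<le> B"
  shows "\<bar>prod a P - prod b P\<bar> \<le> real (card P) * \<delta> * (B + 1) ^ card P"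
  using assms(1-3)
proof (induction P rule: finite_induct)
  case empty
  then show ?case by simp
next
  case (insert x P)
  define Y where "Y = (B + 1) ^ card P"
  have "0 \<le> Y" unfolding Y_def using assms(6) by simp
  have IH: "\<bar>prod a P - prod b P\<bar> \<le> card P * \<delta> * Y"
    unfolding Y_def using insert by auto
  have "\<bar>b p\<bar> \<le> B + 1" if "p \<in> P" for p
    using insert.prems[of p] that assms(5) by auto
  then have "\<bar>prod b P\<bar> \<le> Y"
    unfolding Y_def by (rule abs_prod_le_power)
  have "prod a (insert x P) - prod b (insert x P) = a x * (prod a P - prod b P) + (a x - b x) * prod b P"
    using insert.hyps by (simp add: algebra_simps)
  also have "\<bar>\<dots>\<bar> \<le> \<bar>a x\<bar> * \<bar>prod a P - prod b P\<bar> + \<bar>a x - b x\<bar> * \<bar>prod b P\<bar>"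
    by (metis abs_mult abs_triangle_ineq)
  also have "\<dots> \<le> B * (card P * \<delta> * Y) + \<delta> * Y"
    using insert.prems \<open>\<bar>prod b P\<bar> \<le> Y\<close> IH assms(4,6)
    by (intro add_mono mult_mono) auto
  also have "\<dots> \<le> (B + 1) * (card P * \<delta> * Y) + \<delta> * ((B + 1) * Y)"
  proof (rule add_mono)
    show "B * (card P * \<delta> * Y) \<le> (B + 1) * (card P * \<delta> * Y)"
      using assms(4) \<open>0 \<le> Y\<close> by (simp add: algebra_simps)
    show "\<delta> * Y \<le> \<delta> * ((B + 1) * Y)"
      using assms(4,6) \<open>0 \<le> Y\<close> by (intro mult_left_mono) (simp_all add: algebra_simps)
  qed
  also have "\<dots> = real (card (insert x P)) * \<delta> * (B + 1) ^ card (insert x P)"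
    using insert.hyps unfolding Y_def by (simp add: algebra_simps)
  finally show ?case .
qed

lemma abs_partial_mean_diff_le:
  fixes s1 s2 c N M :: real
  assumes "\<bar>s1\<bar> \<le> M * c" "\<bar>s2\<bar> \<le> M * (N - c)" "0 < c" "c \<le> N"
  shows "\<bar>(s1 + s2) / N - s1 / c\<bar> \<le> 2 * M * (1 - c / N)"
proof -
  have "\<bar>s1 * ((c - N) / (N * c))\<bar> = \<bar>s1\<bar> * ((N - c) / (N * c))"
    using assms(3,4) by (simp add: abs_mult abs_divide)
  also have "\<dots> \<le> M * c * ((N - c) / (N * c))"
    using assms by (intro mult_right_mono) auto
  also have "\<dots> = M * (1 - c / N)"
    using assms(3,4) by (simp add: field_simps)
  finally have 1: "\<bar>s1 * ((c - N) / (N * c))\<bar> \<le> M * (1 - c / N)" .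
  have "\<bar>s2 / N\<bar> \<le> M * (N - c) / N"
    using assms(2-4) by (simp add: divide_right_mono)
  also have "\<dots> = M * (1 - c / N)"
    using assms(3,4) by (simp add: field_simps)
  finally have 2: "\<bar>s2 / N\<bar> \<le> M * (1 - c / N)" .
  have "(s1 + s2) / N - s1 / c = s1 * ((c - N) / (N * c)) + s2 / N"
    using assms(3,4) by (simp add: field_simps)
  also have "\<bar>\<dots>\<bar> \<le> M * (1 - c / N) + M * (1 - c / N)"
    by (rule order_trans[OF abs_triangle_ineq add_mono[OF 1 2]])
  finally show ?thesis by simp
qed

lemma convergent_iff_if_diff_tendsto_0:
  fixes a b :: "nat \<Rightarrow> real"
  assumes "(\<lambda>n. a n - b n) \<longlonglongrightarrow> 0"
  shows "convergent a \<longleftrightarrow> convergent b"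
proof -
  have "(\<lambda>n. b n - a n) \<longlonglongrightarrow> 0"
    using tendsto_minus[OF assms] by simp
  then show ?thesis
    using assms Lim_transform unfolding convergent_def by metis
qed

lemma convergent_if_uniformly_approximable:
  fixes a :: "nat \<Rightarrow> real"
  assumes "\<And>e. 0 < e \<Longrightarrow> \<exists>b. convergent b \<and> (\<forall>n. \<bar>a n - b n\<bar> \<le> e)"
  shows "convergent a"
  unfolding Cauchy_convergent_iff[symmetric]
proof (rule metric_CauchyI)
  fix e :: real
  assume "0 < e"
  then obtain b where b: "convergent b" "\<And>n. \<bar>a n - b n\<bar> \<le> e / 4"
    using assms[of "e / 4"] by auto
  then obtain M where M: "\<And>m n. M \<le> m \<Longrightarrow> M \<le> n \<Longrightarrow> \<bar>b m - b n\<bar> < e / 4"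
    using convergent_Cauchy[OF b(1)] \<open>0 < e\<close> unfolding Cauchy_def dist_real_def
    by (meson divide_pos_pos zero_less_numeral)
  have "dist (a m) (a n) < e" if "M \<le> m" "M \<le> n" for m n
    using M[OF that] b(2)[of m] b(2)[of n] \<open>0 < e\<close> unfolding dist_real_def by linarith
  then show "\<exists>M. \<forall>m\<ge>M. \<forall>n\<ge>M. dist (a m) (a n) < e"
    by blast
qed

section \<open>Sampling expectations versus homomorphism densities\<close>

definition decoration_product ::
  "nat \<Rightarrow> (nat \<Rightarrow> nat \<Rightarrow> 'k \<Rightarrow> real) \<Rightarrow> (nat \<times> nat \<Rightarrow> 'k) \<Rightarrow> real" where
  "decoration_product k F x = (\<Prod>(i,j)\<in>pairs k. F i j (x (i,j)))"

lemma decoration_product_eq: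
  "decoration_product k F x = (\<Prod>p\<in>pairs k. F (fst p) (snd p) (x p))"
  by (simp add: decoration_product_def case_prod_beta)

lemma continuous_map_decoration_product:
  assumes "\<And>i j. (i,j) \<in> pairs k \<Longrightarrow> continuous_on UNIV (F i j)"
  shows "continuous_map (product_topology (\<lambda>_. euclidean) (pairs k)) euclidean
           (decoration_product k F)"
  unfolding decoration_product_eq[abs_def]
proof (rule continuous_map_prod)
  fix p assume p: "p \<in> pairs k"
  have "continuous_map euclidean euclidean (F (fst p) (snd p))"
    using assms[of "fst p" "snd p"] p by simp
  from continuous_map_compose[OF continuous_map_product_projection[OF p] this]
  show "continuous_map (product_topology (\<lambda>_. euclidean) (pairs k)) euclideanreal
          (\<lambda>x. F (fst p) (snd p) (x p))"
    by (simp add: o_def)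
qed simp

lemma abs_hom_dens_minus_sample_exp_le:
  assumes B: "\<And>i j t. (i,j) \<in> pairs k \<Longrightarrow> \<bar>F i j t\<bar> \<le> B" and "k \<le> n" "0 < n"
  shows "\<bar>hom_dens k F n G - sample_exp n G k (decoration_product k F)\<bar>
           \<le> 2 * \<bar>B\<bar> ^ card (pairs k) * (1 - real (card (inj_tuples k n)) / real n ^ k)"
proof -
  define A where "A = {0..<k} \<rightarrow>\<^sub>E {0..<n}"
  define I where "I = inj_tuples k n"
  define w where "w = (\<lambda>\<phi>. \<Prod>(i,j)\<in>pairs k. F i j (G (\<phi> i) (\<phi> j)))"
  define M where "M = \<bar>B\<bar> ^ card (pairs k)"
  have "finite A" "I \<subseteq> A"
    unfolding A_def I_def inj_tuples_def by (auto simp: finite_PiE)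
  have card_A: "card A = n ^ k"
    unfolding A_def by (simp add: card_funcsetE)
  have "0 < card I"
    unfolding I_def card_inj_tuples using \<open>k \<le> n\<close> by (auto simp: prod_pos)
  have "card I \<le> card A"
    using \<open>finite A\<close> \<open>I \<subseteq> A\<close> by (rule card_mono)
  have w_le: "\<bar>w \<phi>\<bar> \<le> M" for \<phi>
    unfolding w_def M_def case_prod_beta
    by (rule abs_prod_le_power) (auto intro: order_trans[OF B abs_ge_self])
  have sum_le: "\<bar>sum w X\<bar> \<le> M * real (card X)" for X
  proof -
    have "\<bar>sum w X\<bar> \<le> (\<Sum>\<phi>\<in>X. \<bar>w \<phi>\<bar>)" by (rule sum_abs)
    also have "\<dots> \<le> real (card X) * M" by (rule sum_bounded_above) (rule w_le)
    finally show ?thesis by (simp add: mult.commute)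
  qed
  have "card (A - I) = card A - card I"
    using \<open>finite A\<close> \<open>I \<subseteq> A\<close> by (simp add: card_Diff_subset finite_subset)
  then have bounds: "\<bar>sum w I\<bar> \<le> M * card I" "\<bar>sum w (A - I)\<bar> \<le> M * (card A - real (card I))"
    using sum_le[of I] sum_le[of "A - I"] \<open>card I \<le> card A\<close> by (simp_all add: of_nat_diff)
  have "hom_dens k F n G = (sum w I + sum w (A - I)) / card A"
    unfolding hom_dens_def w_def A_def[symmetric] card_A
    using sum.subset_diff[OF \<open>I \<subseteq> A\<close> \<open>finite A\<close>, of w] by (simp add: w_def add.commute)
  moreover have "sample_exp n G k (decoration_product k F) = sum w I / card I"
    unfolding sample_exp_def I_def[symmetric] w_def decoration_product_def
    by (intro arg_cong2[where f="(/)"] sum.cong prod.cong refl) auto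
  ultimately have "\<bar>hom_dens k F n G - sample_exp n G k (decoration_product k F)\<bar>
      \<le> 2 * M * (1 - real (card I) / real (card A))"
    using abs_partial_mean_diff_le[OF bounds] \<open>0 < card I\<close> \<open>card I \<le> card A\<close> by simp
  then show ?thesis
    unfolding M_def I_def card_A by simp
qed

lemma hom_dens_minus_sample_exp_tendsto_0:
  fixes Gs :: "nat \<Rightarrow> nat \<Rightarrow> nat \<Rightarrow> 'k"
  assumes B: "\<And>i j t. (i,j) \<in> pairs k \<Longrightarrow> \<bar>F i j t\<bar> \<le> B"
    and N: "filterlim N at_top sequentially"
  shows "(\<lambda>n. hom_dens k F (N n) (Gs n) - sample_exp (N n) (Gs n) k (decoration_product k F))
           \<longlonglongrightarrow> 0"
proof (rule Lim_null_comparison)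
  define r where "r = (\<lambda>n. real (card (inj_tuples k n)) / real n ^ k)"
  have "(\<lambda>n. 2 * \<bar>B\<bar> ^ card (pairs k) * (1 - r (N n))) \<longlonglongrightarrow> 2 * \<bar>B\<bar> ^ card (pairs k) * (1 - 1)"
    using filterlim_compose[OF card_inj_tuples_over_power_tendsto N]
    unfolding r_def by (intro tendsto_intros) simp
  then show "(\<lambda>n. 2 * \<bar>B\<bar> ^ card (pairs k) * (1 - r (N n))) \<longlonglongrightarrow> 0"
    by simp
  have "\<forall>\<^sub>F n in sequentially. Suc k \<le> N n"
    using N by (simp add: filterlim_at_top)
  then show "\<forall>\<^sub>F n in sequentially.
      norm (hom_dens k F (N n) (Gs n) - sample_exp (N n) (Gs n) k (decoration_product k F))
        \<le> 2 * \<bar>B\<bar> ^ card (pairs k) * (1 - r (N n))"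
  proof eventually_elim
    case (elim n)
    then show ?case
      using abs_hom_dens_minus_sample_exp_le[OF B, where n="N n" and G="Gs n"] by (simp add: r_def)
  qed
qed

lemma convergent_hom_dens_iff_sample_exp:
  fixes Gs :: "nat \<Rightarrow> nat \<Rightarrow> nat \<Rightarrow> 'k::topological_space"
  assumes "compact (UNIV :: 'k set)" "filterlim N at_top sequentially"
    and "\<And>i j. (i,j) \<in> pairs k \<Longrightarrow> continuous_on UNIV (F i j)"
  shows "convergent (\<lambda>n. hom_dens k F (N n) (Gs n)) \<longleftrightarrow>
         convergent (\<lambda>n. sample_exp (N n) (Gs n) k (decoration_product k F))"
proof -
  have cont: "continuous_on UNIV (F (fst p) (snd p))" if "p \<in> pairs k" for p
    using assms(3) that by auto
  from bounded_continuous_family[where H="\<lambda>p. F (fst p) (snd p)", OF assms(1) finite_pairs cont]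
  obtain B where "\<And>p t. p \<in> pairs k \<Longrightarrow> \<bar>F (fst p) (snd p) t\<bar> \<le> B"
    by blast
  then have "\<And>i j t. (i,j) \<in> pairs k \<Longrightarrow> \<bar>F i j t\<bar> \<le> B"
    by (metis fst_conv snd_conv)
  from hom_dens_minus_sample_exp_tendsto_0[OF this assms(2)]
  show ?thesis
    by (rule convergent_iff_if_diff_tendsto_0)
qed

lemma sample_exp_0: "sample_exp n G 0 f = f (\<lambda>_. undefined)"
proof -
  have "inj_tuples 0 n = {\<lambda>_. undefined}" "pairs 0 = {}"
    unfolding inj_tuples_def pairs_def by (auto simp: PiE_empty_domain)
  then show ?thesis
    by (simp add: sample_exp_def restrict_def)
qed

lemma sample_exp_lincomb_step:
  "sample_exp n G k (\<lambda>x. c * q x + g x) = c * sample_exp n G k q + sample_exp n G k g"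
  unfolding sample_exp_def by (simp add: sum.distrib sum_distrib_left add_divide_distrib)

lemma abs_sample_exp_diff_le:
  assumes "\<And>x. x \<in> PiE (pairs k) (\<lambda>_. UNIV) \<Longrightarrow> \<bar>f x - g x\<bar> \<le> e" "0 \<le> e"
  shows "\<bar>sample_exp n G k f - sample_exp n G k g\<bar> \<le> e"
proof -
  define I where "I = inj_tuples k n"
  define r where "r = (\<lambda>\<phi>. restrict (\<lambda>(i,j). G (\<phi> i) (\<phi> j)) (pairs k))"
  have "sample_exp n G k f - sample_exp n G k g = (\<Sum>\<phi>\<in>I. f (r \<phi>) - g (r \<phi>)) / card I"
    unfolding sample_exp_def I_def[symmetric] r_def by (simp add: sum_subtractf diff_divide_distrib)
  also have "\<bar>\<dots>\<bar> \<le> (\<Sum>\<phi>\<in>I. \<bar>f (r \<phi>) - g (r \<phi>)\<bar>) / card I"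
    by (simp add: divide_right_mono sum_abs)
  also have "\<dots> \<le> (\<Sum>\<phi>\<in>I. e) / card I"
    using assms(1) by (intro divide_right_mono sum_mono) (auto simp: r_def)
  also have "\<dots> \<le> e"
    using assms(2) by (cases "card I = 0") auto
  finally show ?thesis .
qed

section \<open>Linear combinations\<close>

inductive lincomb :: "('a \<Rightarrow> real) set \<Rightarrow> ('a \<Rightarrow> real) \<Rightarrow> bool" for Q where
  lincomb_zero: "lincomb Q (\<lambda>x. 0)"
| lincomb_step: "q \<in> Q \<Longrightarrow> lincomb Q g \<Longrightarrow> lincomb Q (\<lambda>x. c * q x + g x)"

lemma lincomb_add: "lincomb Q f \<Longrightarrow> lincomb Q g \<Longrightarrow> lincomb Q (\<lambda>x. f x + g x)"
proof (induction f rule: lincomb.induct)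
  case (lincomb_step q f c)
  from lincomb.lincomb_step[OF lincomb_step.hyps(1) lincomb_step.IH[OF lincomb_step.prems], of c]
  show ?case by (simp add: add.assoc)
qed simp

lemma lincomb_scale: "lincomb Q f \<Longrightarrow> lincomb Q (\<lambda>x. a * f x)"
proof (induction f rule: lincomb.induct)
  case (lincomb_step q f c)
  from lincomb.lincomb_step[OF lincomb_step.hyps(1) lincomb_step.IH, of "a * c"]
  show ?case by (simp add: algebra_simps)
qed (simp add: lincomb_zero)

lemma lincomb_single: "q \<in> Q \<Longrightarrow> lincomb Q (\<lambda>x. c * q x)"
  using lincomb_step[OF _ lincomb_zero, of q Q c] by simp

lemma lincomb_sum:
  assumes "finite A" "\<And>a. a \<in> A \<Longrightarrow> q a \<in> Q"
  shows "lincomb Q (\<lambda>x. \<Sum>a\<in>A. c a * q a x)"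
  using assms
proof (induction A rule: finite_induct)
  case (insert a A)
  then show ?case
    using lincomb_step[of "q a" Q "\<lambda>x. \<Sum>a\<in>A. c a * q a x" "c a"] by simp
qed (simp add: lincomb_zero)

lemma lincomb_empty: "lincomb {} g \<Longrightarrow> g = (\<lambda>x. 0)"
  by (induction rule: lincomb.induct) auto

lemma lincomb_mult:
  assumes "\<And>q r. q \<in> Q \<Longrightarrow> r \<in> R \<Longrightarrow> (\<lambda>x. q x * r x) \<in> S"
  shows "lincomb Q f \<Longrightarrow> lincomb R g \<Longrightarrow> lincomb S (\<lambda>x. f x * g x)"
proof (induction f rule: lincomb.induct)
  case (lincomb_step q f c)
  have "lincomb S (\<lambda>x. q x * g x)"
    using \<open>lincomb R g\<close>
  proof (induction g rule: lincomb.induct)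
    case (lincomb_step r g d)
    from lincomb.lincomb_step[OF assms[OF \<open>q \<in> Q\<close> \<open>r \<in> R\<close>] lincomb_step.IH, of d]
    show ?case by (simp add: algebra_simps)
  qed (simp add: lincomb_zero)
  from lincomb_add[OF lincomb_scale[OF this, of c] lincomb_step.IH[OF lincomb_step.prems]]
  show ?case by (simp add: algebra_simps)
qed (simp add: lincomb_zero)

lemma lincomb_compose: "lincomb Q g \<Longrightarrow> lincomb ((\<lambda>q x. q (\<phi> x)) ` Q) (\<lambda>x. g (\<phi> x))"
  by (induction rule: lincomb.induct) (auto intro: lincomb.intros)

lemma continuous_on_lincomb:
  assumes "\<And>q. q \<in> Q \<Longrightarrow> continuous_on S q"
  shows "lincomb Q g \<Longrightarrow> continuous_on S g"
  by (induction rule: lincomb.induct) (auto intro!: continuous_intros simp: assms)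

lemma lincomb_uniform_approx:
  assumes "\<And>q e. q \<in> Q \<Longrightarrow> 0 < e \<Longrightarrow> \<exists>g. lincomb R g \<and> (\<forall>x. \<bar>q x - g x\<bar> < e)"
  shows "lincomb Q f \<Longrightarrow> 0 < e \<Longrightarrow> \<exists>g. lincomb R g \<and> (\<forall>x. \<bar>f x - g x\<bar> < e)"
proof (induction f arbitrary: e rule: lincomb.induct)
  case lincomb_zero
  then show ?case by (auto intro: lincomb.lincomb_zero)
next
  case (lincomb_step q f c)
  define e' where "e' = e / (2 * (\<bar>c\<bar> + 1))"
  have "0 < e'" unfolding e'_def using lincomb_step.prems by simp
  then obtain q' where q': "lincomb R q'" "\<And>x. \<bar>q x - q' x\<bar> < e'"
    using assms[OF lincomb_step.hyps(1)] by blast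
  obtain f' where f': "lincomb R f'" "\<And>x. \<bar>f x - f' x\<bar> < e / 2"
    using lincomb_step.IH[of "e / 2"] lincomb_step.prems by auto
  have cq: "\<bar>c * (q x - q' x)\<bar> \<le> e / 2" for x
  proof -
    have "\<bar>c * (q x - q' x)\<bar> \<le> \<bar>c\<bar> * e'"
      unfolding abs_mult using q'(2)[of x] by (intro mult_left_mono) auto
    also have "\<dots> \<le> e / 2"
      unfolding e'_def using lincomb_step.prems by (simp add: field_simps)
    finally show ?thesis .
  qed
  have "\<bar>(c * q x + f x) - (c * q' x + f' x)\<bar> < e" for x
    using cq[of x] f'(2)[of x] abs_triangle_ineq[of "c * (q x - q' x)" "f x - f' x"]
    by (simp add: algebra_simps)
  moreover have "lincomb R (\<lambda>x. c * q' x + f' x)"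
    by (rule lincomb_add[OF lincomb_scale[OF q'(1)] f'(1)])
  ultimately show ?case by blast
qed

lemma convergent_sample_exp_lincomb:
  assumes "\<And>q. q \<in> Q \<Longrightarrow> convergent (\<lambda>n. sample_exp (N n) (Gs n) k q)"
  shows "lincomb Q g \<Longrightarrow> convergent (\<lambda>n. sample_exp (N n) (Gs n) k g)"
proof (induction rule: lincomb.induct)
  case lincomb_zero
  show ?case by (simp add: sample_exp_def convergent_const)
next
  case (lincomb_step q g c)
  obtain l1 l2 where "(\<lambda>n. sample_exp (N n) (Gs n) k q) \<longlonglongrightarrow> l1"
      "(\<lambda>n. sample_exp (N n) (Gs n) k g) \<longlonglongrightarrow> l2"
    using assms[OF lincomb_step.hyps(1)] lincomb_step.IH by (auto simp: convergent_def)
  then have "(\<lambda>n. c * sample_exp (N n) (Gs n) k q + sample_exp (N n) (Gs n) k g) \<longlonglongrightarrow> c * l1 + l2"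
    by (intro tendsto_intros)
  then show ?case
    unfolding sample_exp_lincomb_step convergent_def by blast
qed

section \<open>Density of products of generators\<close>

lemma cont_fns_mult: "a \<in> cont_fns \<Longrightarrow> b \<in> cont_fns \<Longrightarrow> (\<lambda>t. a t * b t) \<in> cont_fns"
  by (simp add: cont_fns_def continuous_on_mult)

lemma generating_system_approx:
  assumes "generating_system Fam" "continuous_on UNIV f" "0 < e"
  obtains g where "lincomb Fam g" "\<And>x. \<bar>f x - g x\<bar> < e"
proof -
  have "f \<in> cont_fns"
    using assms(2) by (simp add: cont_fns_def)
  then obtain m :: nat and c h where "\<forall>i<m. h i \<in> Fam" "\<forall>x. \<bar>f x - (\<Sum>i<m. c i * h i x)\<bar> < e"
    using assms(1,3) unfolding generating_system_def by blast
  moreover from this(1) have "lincomb Fam (\<lambda>x. \<Sum>i<m. c i * h i x)"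
    by (intro lincomb_sum) auto
  ultimately show thesis
    using that by blast
qed

lemma generating_system_nonempty:
  fixes Fam :: "('k::topological_space \<Rightarrow> real) set"
  assumes "generating_system Fam"
  shows "Fam \<noteq> {}"
proof
  assume "Fam = {}"
  obtain g where "lincomb Fam g" "\<And>x::'k. \<bar>1 - g x\<bar> < 1"
    using generating_system_approx[OF assms, of "\<lambda>_. 1" 1] by auto
  with \<open>Fam = {}\<close> show False
    using lincomb_empty by force
qed

definition coordinate_products :: "('k \<Rightarrow> real) set \<Rightarrow> 'i set \<Rightarrow> (('i \<Rightarrow> 'k) \<Rightarrow> real) set" where
  "coordinate_products A P = {(\<lambda>x. \<Prod>p\<in>P. h p (x p)) | h. \<forall>p\<in>P. h p \<in> A}"

lemma coordinate_products_mult: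
  assumes "\<And>a b. a \<in> A \<Longrightarrow> b \<in> A \<Longrightarrow> (\<lambda>t. a t * b t) \<in> A"
    and "q \<in> coordinate_products A P" "r \<in> coordinate_products A P"
  shows "(\<lambda>x. q x * r x) \<in> coordinate_products A P"
proof -
  obtain h h' where "\<forall>p\<in>P. h p \<in> A" "q = (\<lambda>x. \<Prod>p\<in>P. h p (x p))"
    and "\<forall>p\<in>P. h' p \<in> A" "r = (\<lambda>x. \<Prod>p\<in>P. h' p (x p))"
    using assms(2,3) unfolding coordinate_products_def by blast
  then show ?thesis
    unfolding coordinate_products_def
    by (intro CollectI exI[of _ "\<lambda>p t. h p t * h' p t"]) (simp add: assms(1) prod.distrib)
qed

lemma continuous_on_coordinate_product:
  assumes "q \<in> coordinate_products cont_fns P"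
  shows "continuous_on S q"
proof -
  obtain h where h: "\<And>p. p \<in> P \<Longrightarrow> continuous_on UNIV (h p)" and q: "q = (\<lambda>x. \<Prod>p\<in>P. h p (x p))"
    using assms unfolding coordinate_products_def cont_fns_def by blast
  have "continuous_on UNIV (\<lambda>x. h p (x p))" if "p \<in> P" for p
    by (rule continuous_on_compose2[OF h[OF that] continuous_on_product_coordinates]) auto
  then have "continuous_on UNIV q"
    unfolding q by (rule continuous_on_prod)
  then show ?thesis
    by (rule continuous_on_subset) simp
qed

lemma lincomb_coordinate_product:
  assumes "finite P" "\<And>p. p \<in> P \<Longrightarrow> lincomb A (g p)"
  shows "lincomb (coordinate_products A P) (\<lambda>x. \<Prod>p\<in>P. g p (x p))"
  using assms
proof (induction P rule: finite_induct)
  case empty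
  have "(\<lambda>x. 1) \<in> coordinate_products A {}"
    unfolding coordinate_products_def by simp
  from lincomb_single[OF this, of 1] show ?case by simp
next
  case (insert p P)
  let ?A\<^sub>p = "(\<lambda>a x. a (x p)) ` A"
  have "(\<lambda>x. a' x * q x) \<in> coordinate_products A (insert p P)"
    if a': "a' \<in> ?A\<^sub>p" and q: "q \<in> coordinate_products A P" for a' q
  proof -
    obtain a where a: "a \<in> A" "a' = (\<lambda>x. a (x p))"
      using a' by blast
    obtain h where h: "\<forall>p\<in>P. h p \<in> A" "q = (\<lambda>x. \<Prod>p\<in>P. h p (x p))"
      using q unfolding coordinate_products_def by blast
    have "(\<Prod>p'\<in>P. (h(p := a)) p' (x p')) = q x" for x
      unfolding h(2) using insert.hyps by (intro prod.cong) auto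
    then have "(\<lambda>x. a' x * q x) = (\<lambda>x. \<Prod>p'\<in>insert p P. (h(p := a)) p' (x p'))"
      using insert.hyps by (simp add: a(2))
    then show ?thesis
      unfolding coordinate_products_def using a(1) h(1) by force
  qed
  moreover have "lincomb ?A\<^sub>p (\<lambda>x. g p (x p))"
    using lincomb_compose[OF insert.prems[of p]] by simp
  moreover have "lincomb (coordinate_products A P) (\<lambda>x. \<Prod>p\<in>P. g p (x p))"
    using insert by simp
  ultimately show ?case
    using lincomb_mult[of ?A\<^sub>p "coordinate_products A P"] insert.hyps by simp
qed

lemma coordinate_product_approx:
  fixes q :: "('i \<Rightarrow> 'k::topological_space) \<Rightarrow> real"
  assumes "compact (UNIV :: 'k set)" "generating_system Fam" "finite P"
    and "q \<in> coordinate_products cont_fns P" "0 < e"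
  shows "\<exists>g. lincomb (coordinate_products Fam P) g \<and> (\<forall>x. \<bar>q x - g x\<bar> < e)"
proof -
  obtain h where h_cont: "\<And>p. p \<in> P \<Longrightarrow> continuous_on UNIV (h p)"
    and q: "q = (\<lambda>x. \<Prod>p\<in>P. h p (x p))"
    using assms(4) unfolding coordinate_products_def cont_fns_def by blast
  obtain B where "0 \<le> B" and B: "\<And>p t. p \<in> P \<Longrightarrow> \<bar>h p t\<bar> \<le> B"
    using bounded_continuous_family[where H=h, OF assms(1,3) h_cont] by blast
  define m where "m = card P"
  define \<delta> where "\<delta> = min 1 (e / (2 * (real m + 1)) / (B + 1) ^ m)"
  have "0 < (B + 1) ^ m"
    using \<open>0 \<le> B\<close> by simp
  then have "0 < \<delta>"
    unfolding \<delta>_def using assms(5) by simp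
  have "\<delta> \<le> 1"
    unfolding \<delta>_def by simp
  have "\<delta> \<le> e / (2 * (real m + 1)) / (B + 1) ^ m"
    unfolding \<delta>_def by simp
  then have "\<delta> * (B + 1) ^ m \<le> e / (2 * (real m + 1))"
    using \<open>0 < (B + 1) ^ m\<close> by (simp add: pos_le_divide_eq mult_ac)
  have "\<exists>g. lincomb Fam g \<and> (\<forall>t. \<bar>h p t - g t\<bar> < \<delta>)" if "p \<in> P" for p
    using generating_system_approx[OF assms(2) h_cont[OF that] \<open>0 < \<delta>\<close>] by blast
  then obtain g where g: "\<And>p. p \<in> P \<Longrightarrow> lincomb Fam (g p)"
    and g_close: "\<And>p t. p \<in> P \<Longrightarrow> \<bar>h p t - g p t\<bar> < \<delta>"
    by (metis bchoice)
  have "\<bar>q x - (\<Prod>p\<in>P. g p (x p))\<bar> < e" for x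
  proof -
    have "\<bar>q x - (\<Prod>p\<in>P. g p (x p))\<bar> \<le> real m * (\<delta> * (B + 1) ^ m)"
      unfolding q m_def mult.assoc[symmetric]
      using \<open>0 < \<delta>\<close> \<open>\<delta> \<le> 1\<close> \<open>0 \<le> B\<close> B g_close
      by (intro abs_prod_diff_le[OF assms(3)]) (auto intro: less_imp_le)
    also have "\<dots> \<le> real m * (e / (2 * (real m + 1)))"
      using \<open>\<delta> * (B + 1) ^ m \<le> e / (2 * (real m + 1))\<close> by (rule mult_left_mono) simp
    also have "\<dots> < e"
      using assms(5) by (simp add: field_simps) (intro add_nonneg_pos mult_nonneg_nonneg; simp)
    finally show ?thesis .
  qed
  moreover have "lincomb (coordinate_products Fam P) (\<lambda>x. \<Prod>p\<in>P. g p (x p))"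
    by (rule lincomb_coordinate_product[OF assms(3) g])
  ultimately show ?thesis
    by blast
qed

lemma Stone_Weierstrass_coordinate_products:
  fixes f :: "('i \<Rightarrow> 'k::t2_space) \<Rightarrow> real"
  assumes "compact (UNIV :: 'k set)" "finite P"
    and "continuous_map (product_topology (\<lambda>_. euclidean) P) euclidean f" "0 < e"
  obtains g where "lincomb (coordinate_products cont_fns P) g"
    "\<And>x. x \<in> PiE P (\<lambda>_. UNIV) \<Longrightarrow> \<bar>f x - g x\<bar> < e"
proof -
  let ?Q = "coordinate_products cont_fns P :: (('i \<Rightarrow> 'k) \<Rightarrow> real) set"
  let ?S = "PiE P (\<lambda>_. UNIV :: 'k set)"
  have "\<exists>g. lincomb ?Q g \<and> (\<forall>x\<in>?S. \<bar>f x - g x\<bar> < e)"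
  proof (rule Stone_Weierstrass_HOL[OF compact_PiE_UNIV[OF assms(1)] _ _ _ _ _
        continuous_on_PiE_UNIV[OF assms(3)] assms(4)])
    have "(\<lambda>x. 1) \<in> ?Q"
      unfolding coordinate_products_def cont_fns_def by (intro CollectI exI[of _ "\<lambda>_ _. 1"]) simp
    from lincomb_single[OF this] show "lincomb ?Q (\<lambda>x. c)" for c
      by simp
    show "continuous_on ?S g" if "lincomb ?Q g" for g
      using continuous_on_lincomb[OF continuous_on_coordinate_product that] .
    show "lincomb ?Q (\<lambda>x. g x + h x)" if "lincomb ?Q g \<and> lincomb ?Q h" for g h
      using that lincomb_add by blast
    show "lincomb ?Q (\<lambda>x. g x * h x)" if "lincomb ?Q g \<and> lincomb ?Q h" for g h
      using that lincomb_mult[OF coordinate_products_mult[OF cont_fns_mult]] by blast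
  next
    fix x y
    assume xy: "x \<in> ?S \<and> y \<in> ?S \<and> x \<noteq> y"
    then obtain p where p: "x p \<noteq> y p" "p \<in> P"
      by (metis PiE_ext)
    obtain g :: "'k \<Rightarrow> real" where g: "continuous_on UNIV g" "g (x p) \<noteq> g (y p)"
      using continuous_separating_function[OF assms(1) p(1)] by blast
    define q where "q = (\<lambda>z :: 'i \<Rightarrow> 'k. \<Prod>p'\<in>P. ((\<lambda>_. \<lambda>_. 1)(p := g)) p' (z p'))"
    have "q z = g (z p)" for z
      unfolding q_def using assms(2) p(2) by (simp add: fun_upd_def if_distrib[of "\<lambda>f. f _"])
    moreover have "q \<in> ?Q"
      unfolding q_def coordinate_products_def cont_fns_def using g(1) by auto
    ultimately show "\<exists>f. lincomb ?Q f \<and> f x \<noteq> f y"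
      using lincomb_single[of q ?Q 1] g(2) by auto
  qed
  then show thesis
    using that by blast
qed

lemma generating_system_coordinate_products_dense:
  fixes f :: "('i \<Rightarrow> 'k::t2_space) \<Rightarrow> real"
  assumes "compact (UNIV :: 'k set)" "generating_system Fam" "finite P"
    and "continuous_map (product_topology (\<lambda>_. euclidean) P) euclidean f" "0 < e"
  obtains g where "lincomb (coordinate_products Fam P) g"
    "\<And>x. x \<in> PiE P (\<lambda>_. UNIV) \<Longrightarrow> \<bar>f x - g x\<bar> < e"
proof -
  have "0 < e / 2"
    using assms(5) by simp
  then obtain g\<^sub>0 where g\<^sub>0: "lincomb (coordinate_products cont_fns P) g\<^sub>0"
    and f_g\<^sub>0: "\<And>x. x \<in> PiE P (\<lambda>_. UNIV) \<Longrightarrow> \<bar>f x - g\<^sub>0 x\<bar> < e / 2"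
    using Stone_Weierstrass_coordinate_products[OF assms(1,3,4)] by blast
  obtain g where "lincomb (coordinate_products Fam P) g" and g\<^sub>0_g: "\<And>x. \<bar>g\<^sub>0 x - g x\<bar> < e / 2"
    using lincomb_uniform_approx[OF coordinate_product_approx[OF assms(1-3)] g\<^sub>0 \<open>0 < e / 2\<close>]
    by blast
  moreover have "\<bar>f x - g x\<bar> < e" if "x \<in> PiE P (\<lambda>_. UNIV)" for x
    using f_g\<^sub>0[OF that] g\<^sub>0_g[of x] by linarith
  ultimately show thesis
    using that by blast
qed

lemma convergent_sample_exp_coordinate_product:
  fixes Gs :: "nat \<Rightarrow> nat \<Rightarrow> nat \<Rightarrow> 'k::topological_space"
  assumes "compact (UNIV :: 'k set)" "generating_system Fam" "filterlim N at_top sequentially"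
    and hom: "\<And>F. dgraph_in Fam k F \<Longrightarrow> convergent (\<lambda>n. hom_dens k F (N n) (Gs n))"
    and "q \<in> coordinate_products Fam (pairs k)"
  shows "convergent (\<lambda>n. sample_exp (N n) (Gs n) k q)"
proof -
  obtain h where h: "\<And>p. p \<in> pairs k \<Longrightarrow> h p \<in> Fam" and q: "q = (\<lambda>x. \<Prod>p\<in>pairs k. h p (x p))"
    using assms(5) unfolding coordinate_products_def by blast
  obtain a where "a \<in> Fam"
    using generating_system_nonempty[OF assms(2)] by blast
  \<comment> \<open>Diagonal entries do not enter \<open>hom_dens\<close>; they only have to lie in \<open>Fam\<close>.\<close>
  define F where "F = (\<lambda>i j. if i < j then h (i,j) else if j < i then h (j,i) else a)"
  have "dgraph_in Fam k F"
    using h \<open>a \<in> Fam\<close> by (auto simp: dgraph_in_def F_def pairs_def)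
  moreover have cont: "continuous_on UNIV (F i j)" if "(i,j) \<in> pairs k" for i j
  proof -
    have "F i j \<in> Fam" "Fam \<subseteq> cont_fns"
      using h[OF that] that assms(2) by (auto simp: F_def pairs_def generating_system_def)
    then show ?thesis
      by (auto simp: cont_fns_def)
  qed
  moreover have "decoration_product k F = q"
    unfolding decoration_product_eq[abs_def] q by (intro ext prod.cong) (auto simp: F_def pairs_def)
  ultimately show ?thesis
    using hom convergent_hom_dens_iff_sample_exp[where k=k and F=F and Gs=Gs, OF assms(1,3) cont] by simp
qed

lemma convergent_hom_dens_if_dg_convergent:
  fixes Gs :: "nat \<Rightarrow> nat \<Rightarrow> nat \<Rightarrow> 'k::topological_space"
  assumes "compact (UNIV :: 'k set)" "filterlim N at_top sequentially" "dg_convergent N Gs"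
    and "dgraph_in cont_fns k F"
  shows "convergent (\<lambda>n. hom_dens k F (N n) (Gs n))"
proof -
  have cont: "continuous_on UNIV (F i j)" if "(i,j) \<in> pairs k" for i j
    using assms(4) that by (auto simp: dgraph_in_def pairs_def cont_fns_def)
  have "convergent (\<lambda>n. sample_exp (N n) (Gs n) k (decoration_product k F))"
    using assms(3) continuous_map_decoration_product[where k=k and F=F, OF cont]
    unfolding dg_convergent_def by blast
  then show ?thesis
    using convergent_hom_dens_iff_sample_exp[where k=k and F=F and Gs=Gs, OF assms(1,2) cont] by simp
qed

lemma dg_convergent_if_convergent_hom_dens:
  fixes Gs :: "nat \<Rightarrow> nat \<Rightarrow> nat \<Rightarrow> 'k::t2_space"
  assumes "compact (UNIV :: 'k set)" "generating_system Fam" "filterlim N at_top sequentially"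
    and hom: "\<And>k F. 0 < k \<Longrightarrow> dgraph_in Fam k F \<Longrightarrow> convergent (\<lambda>n. hom_dens k F (N n) (Gs n))"
  shows "dg_convergent N Gs"
  unfolding dg_convergent_def
proof (intro allI impI)
  fix k and f :: "(nat \<times> nat \<Rightarrow> 'k) \<Rightarrow> real"
  assume f: "continuous_map (product_topology (\<lambda>_. euclidean) (pairs k)) euclidean f"
  show "convergent (\<lambda>n. sample_exp (N n) (Gs n) k f)"
  proof (cases "k = 0")
    case True
    then show ?thesis
      by (simp add: sample_exp_0 convergent_const)
  next
    case False
    have "convergent (\<lambda>n. sample_exp (N n) (Gs n) k q)"
      if "q \<in> coordinate_products Fam (pairs k)" for q
      using False by (intro convergent_sample_exp_coordinate_product[OF assms(1-3) hom that]) simp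
    then have conv: "convergent (\<lambda>n. sample_exp (N n) (Gs n) k g)"
      if "lincomb (coordinate_products Fam (pairs k)) g" for g
      using that by (rule convergent_sample_exp_lincomb)
    show ?thesis
    proof (rule convergent_if_uniformly_approximable)
      fix e :: real
      assume "0 < e"
      then obtain g where g: "lincomb (coordinate_products Fam (pairs k)) g"
        and f_g: "\<And>x. x \<in> PiE (pairs k) (\<lambda>_. UNIV) \<Longrightarrow> \<bar>f x - g x\<bar> < e"
        using generating_system_coordinate_products_dense[OF assms(1,2) finite_pairs f] by blast
      have "\<bar>sample_exp (N n) (Gs n) k f - sample_exp (N n) (Gs n) k g\<bar> \<le> e" for n
        using f_g \<open>0 < e\<close> by (intro abs_sample_exp_diff_le) (auto intro: less_imp_le)
      with conv[OF g] show "\<exists>b. convergent b \<and> (\<forall>n. \<bar>sample_exp (N n) (Gs n) k f - b n\<bar> \<le> e)"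
        by blast
    qed
  qed
qed

theorem theorem1:
  fixes Gs :: "nat \<Rightarrow> nat \<Rightarrow> nat \<Rightarrow> 'k::{second_countable_topology, t2_space}"
    and N :: "nat \<Rightarrow> nat"
    and Fam :: "('k \<Rightarrow> real) set"
  assumes "compact (UNIV :: 'k set)"
    and "generating_system Fam"
    and "\<And>n. N n > 0"
    and "\<And>n. dgraph (N n) (Gs n)"
    and "filterlim N at_top sequentially"
  shows "(dg_convergent N Gs \<longleftrightarrow>
            (\<forall>k F. 0 < k \<and> dgraph_in cont_fns k F \<longrightarrow>
                convergent (\<lambda>n. hom_dens k F (N n) (Gs n))))
       \<and> ((\<forall>k F. 0 < k \<and> dgraph_in cont_fns k F \<longrightarrow>
                convergent (\<lambda>n. hom_dens k F (N n) (Gs n))) \<longleftrightarrow>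
            (\<forall>k F. 0 < k \<and> dgraph_in Fam k F \<longrightarrow>
                convergent (\<lambda>n. hom_dens k F (N n) (Gs n))))"
proof -
  \<comment> \<open>Sampling only reads the entries \<open>(i,j)\<close> with \<open>i < j\<close>.\<close>
  let ?ii = "\<forall>k F. 0 < k \<and> dgraph_in cont_fns k F \<longrightarrow> convergent (\<lambda>n. hom_dens k F (N n) (Gs n))"
  let ?iii = "\<forall>k F. 0 < k \<and> dgraph_in Fam k F \<longrightarrow> convergent (\<lambda>n. hom_dens k F (N n) (Gs n))"
  have "dg_convergent N Gs \<Longrightarrow> ?ii"
    using convergent_hom_dens_if_dg_convergent[OF assms(1,5)] by blast
  moreover have "Fam \<subseteq> cont_fns"
    using assms(2) unfolding generating_system_def by blast
  then have "?ii \<Longrightarrow> ?iii"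
    unfolding dgraph_in_def by blast
  moreover have "?iii \<Longrightarrow> dg_convergent N Gs"
    using dg_convergent_if_convergent_hom_dens[OF assms(1,2,5)] by blast
  ultimately show ?thesis
    by blast
qed

end
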